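(* For every nonnegative integer $n$, the number of partitions $\lambda$ of $n$ with $\ell(\lambda)+\mu_2(\lambda)$ even minus the number of partitions $\lambda$ of $n$ with $\ell(\lambda)+\mu_2(\lambda)$ odd equals the number of partitions of $n$ into distinct odd parts.
   Context: For a partition $\lambda$, $\ell(\lambda)$ is its number of parts, and $\mu_2(\lambda)$ (the $2$-measure) is the length of the longest subsequence of the parts of $\lambda$ (listed in weakly decreasing order) in which the difference between any two consecutive members of the subsequence is at least $2$. *)

theory Defs
  imports Main "HOL-Library.Sublist"
begin

definition is_partition :: "nat \<Rightarrow> nat list \<Rightarrow> bool" where
  "is_partition n xs \<longleftrightarrow> sorted_wrt (\<ge>) xs \<and> (\<forall>x\<in>set xs. 0 < x) \<and> sum_list xs = n"

definition partitions_of :: "nat \<Rightarrow> nat list set" where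
  "partitions_of n = {xs. is_partition n xs}"

definition num_parts :: "nat list \<Rightarrow> nat" where
  "num_parts xs = length xs"

definition mu2 :: "nat list \<Rightarrow> nat" where
  "mu2 xs = Max {length ys | ys. subseq ys xs \<and> successively (\<lambda>a b. b + 2 \<le> a) ys}"

end

(* Let F_c be the generating function of partitions with all parts >= c, each counted with
   sign (-1)^(l + mu2).  If the smallest part of a partition is c, then mu2 is one more than
   the 2-measure of its parts >= c + 2.  Removing a smallest part c, and then possibly a part
   c + 1, therefore gives
     (1 + q^c) (1 + q^(c+1)) (F_c - F_(c+1)) = q^c F_(c+2),    F_c = 1 + O(q^c).
   This recurrence and the initial condition determine the family (F_c), and the q-series
   G_c = sum_j q^(j(j+c-1)) / ((q;q)_j (-q^c;q)_j) satisfies both, so F_1 = G_1.  Finally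
   G_1 = sum_j q^(j^2) / (q^2;q^2)_j, and q^(j^2) / (q^2;q^2)_j is the generating function of
   the partitions into j distinct odd parts. *)

theory Submission
  imports Defs "HOL-Computational_Algebra.Formal_Power_Series"
begin

unbundle fps_syntax

lemma set_mono_subseq: "subseq xs ys \<Longrightarrow> set xs \<subseteq> set ys"
  by (auto dest: list_emb_set)

lemma sorted_dropWhile_below:
  fixes xs :: "nat list"
  assumes "sorted_wrt (\<ge>) xs" "x \<in> set (dropWhile (\<lambda>x. k \<le> x) xs)"
  shows "x < k"
  using assms by (induction xs) (auto split: if_splits)

lemma sorted_ge_eq_butlast_snoc_min:
  fixes xs :: "'a :: linorder list"
  assumes "sorted_wrt (\<ge>) xs" "c \<in> set xs" "\<forall>x\<in>set xs. c \<le> x"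
  shows "xs = butlast xs @ [c]"
proof (cases xs rule: rev_cases)
  case Nil
  with assms(2) show ?thesis by simp
next
  case (snoc ys y)
  with assms(1,2) have "y \<le> c"
    by (auto simp: sorted_wrt_append)
  with assms(3) snoc have "y = c"
    by (simp add: order_antisym)
  with snoc show ?thesis by simp
qed

lemma length_le_sum_list:
  fixes xs :: "nat list"
  shows "\<forall>x\<in>set xs. 0 < x \<Longrightarrow> length xs \<le> sum_list xs"
  by (induction xs) auto

lemma sum_list_map_add_const:
  fixes xs :: "nat list"
  shows "sum_list (map (\<lambda>x. x + k) xs) = sum_list xs + length xs * k"
  by (induction xs) auto

lemma fps_one_plus_X_power_mult_nth:
  "((1 + fps_X ^ k) * f) $ n = f $ n + (if n < k then 0 else f $ (n - k))"
  by (simp add: distrib_right fps_X_power_mult_nth)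

lemma fps_mult_nth_cong:
  "(\<And>i. i \<le> n \<Longrightarrow> g $ i = h $ i) \<Longrightarrow> (f * g) $ n = (f * h) $ n"
  by (auto simp: fps_mult_nth intro!: sum.cong)

lemma fps_mult_nth_eq_if_lower_zero:
  fixes f g :: "'a :: comm_ring_1 fps"
  assumes "f $ 0 = 1" "\<And>i. i < n \<Longrightarrow> g $ i = 0"
  shows "(f * g) $ n = g $ n"
proof -
  have "(f * g) $ n = f $ 0 * g $ n + (\<Sum>i=Suc 0..n. f $ i * g $ (n - i))"
    by (simp add: fps_mult_nth sum.atLeast_Suc_atMost)
  also have "(\<Sum>i=Suc 0..n. f $ i * g $ (n - i)) = 0"
    using assms(2) by (intro sum.neutral) auto
  finally show ?thesis using assms(1) by simp
qed

lemma fps_mult_right_cancel_unit: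
  fixes f g h :: "'a :: idom fps"
  assumes "f $ 0 \<noteq> 0"
  shows "g * f = h * f \<longleftrightarrow> g = h"
proof -
  from assms have "f \<noteq> 0" by auto
  then show ?thesis by simp
qed

section \<open>The 2-measure\<close>

abbreviation two_apart :: "nat \<Rightarrow> nat \<Rightarrow> bool" where
  "two_apart \<equiv> \<lambda>a b. b + 2 \<le> a"

lemma finite_mu2_lengths:
  "finite {length ys | ys. subseq ys xs \<and> successively two_apart ys}"
proof (rule finite_subset)
  show "{length ys | ys. subseq ys xs \<and> successively two_apart ys} \<subseteq> {..length xs}"
    by (auto dest: list_emb_length)
qed simp

lemma length_le_mu2:
  assumes "subseq ys xs" "successively two_apart ys"
  shows "length ys \<le> mu2 xs"
proof -
  have "length ys \<in> {length ys | ys. subseq ys xs \<and> successively two_apart ys}"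
    using assms by blast
  then show ?thesis
    unfolding mu2_def by (rule Max_ge[OF finite_mu2_lengths])
qed

lemma mu2_witness:
  obtains ys where "subseq ys xs" "successively two_apart ys" "length ys = mu2 xs"
proof -
  have "length [] \<in> {length ys | ys. subseq ys xs \<and> successively two_apart ys}"
    by (intro CollectI exI[of _ "[]"]) simp
  then have "{length ys | ys. subseq ys xs \<and> successively two_apart ys} \<noteq> {}"
    by (metis empty_iff)
  then have "mu2 xs \<in> {length ys | ys. subseq ys xs \<and> successively two_apart ys}"
    unfolding mu2_def by (rule Max_in[OF finite_mu2_lengths])
  then show thesis
    using that by auto
qed

lemma mu2_Nil [simp]: "mu2 [] = 0"
proof -
  obtain ys where "subseq ys []" "successively two_apart ys" "length ys = mu2 []"
    by (rule mu2_witness)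
  then show ?thesis by (auto dest: list_emb_Nil2)
qed

lemma mu2_append_low_block:
  assumes high: "\<forall>x\<in>set xs. c + 2 \<le> x"
    and low: "set zs \<subseteq> {c, Suc c}" "c \<in> set zs"
  shows "mu2 (xs @ zs) = mu2 xs + 1"
proof (rule antisym)
  show "mu2 (xs @ zs) \<le> mu2 xs + 1"
  proof -
    obtain ys where ys: "subseq ys (xs @ zs)" "successively two_apart ys" "length ys = mu2 (xs @ zs)"
      by (rule mu2_witness)
    then obtain ys1 ys2 where split: "ys = ys1 @ ys2" "subseq ys1 xs" "subseq ys2 zs"
      by (auto elim: subseq_appendE)
    have "successively two_apart ys1" "successively two_apart ys2"
      using ys(2) split(1) by (auto simp: successively_append_iff)
    with split(2) have "length ys1 \<le> mu2 xs"
      by (intro length_le_mu2)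
    moreover have "length ys2 \<le> 1"
    proof (rule ccontr)
      assume "\<not> length ys2 \<le> 1"
      then obtain a b r where "ys2 = a # b # r"
        by (cases ys2; cases "tl ys2") auto
      moreover have "set ys2 \<subseteq> {c, Suc c}"
        using split(3) low(1) set_mono_subseq by blast
      ultimately show False
        using \<open>successively two_apart ys2\<close> by auto
    qed
    ultimately show ?thesis using ys(3) split(1) by simp
  qed
next
  obtain ys where ys: "subseq ys xs" "successively two_apart ys" "length ys = mu2 xs"
    by (rule mu2_witness)
  have "subseq (ys @ [c]) (xs @ zs)"
    using ys(1) low(2) by (intro list_emb_append_mono) (auto simp: subseq_singleton_left)
  moreover have "successively two_apart (ys @ [c])"
  proof -
    have "ys \<noteq> [] \<Longrightarrow> last ys \<in> set xs"
      using ys(1) set_mono_subseq last_in_set by blast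
    then show ?thesis using ys(2) high by (auto simp: successively_append_iff)
  qed
  ultimately have "length (ys @ [c]) \<le> mu2 (xs @ zs)" by (rule length_le_mu2)
  then show "mu2 xs + 1 \<le> mu2 (xs @ zs)" using ys(3) by simp
qed

lemma mu2_eq_mu2_takeWhile:
  assumes "sorted_wrt (\<ge>) xs" "\<forall>x\<in>set xs. c \<le> x" "c \<in> set xs"
  shows "mu2 xs = mu2 (takeWhile (\<lambda>x. c + 2 \<le> x) xs) + 1"
proof -
  let ?high = "takeWhile (\<lambda>x. c + 2 \<le> x) xs" and ?low = "dropWhile (\<lambda>x. c + 2 \<le> x) xs"
  have "set ?low \<subseteq> {c, Suc c}"
  proof
    fix x assume x: "x \<in> set ?low"
    then have "x < c + 2" using assms(1) by (intro sorted_dropWhile_below)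
    moreover have "c \<le> x" using assms(2) set_dropWhileD[OF x] by blast
    ultimately show "x \<in> {c, Suc c}" by auto
  qed
  moreover have "c \<in> set ?low"
  proof -
    have "set xs = set ?high \<union> set ?low"
      by (metis set_append takeWhile_dropWhile_id)
    moreover have "c \<notin> set ?high"
      by (auto dest: set_takeWhileD)
    ultimately show ?thesis using assms(3) by blast
  qed
  ultimately have "mu2 (?high @ ?low) = mu2 ?high + 1"
    by (intro mu2_append_low_block) (auto dest: set_takeWhileD)
  then show ?thesis by simp
qed

lemma mu2_snoc_smallest:
  assumes "sorted_wrt (\<ge>) xs" "\<forall>x\<in>set xs. c \<le> x" "c \<in> set xs"
  shows "mu2 (xs @ [c]) = mu2 xs"
proof -
  have "mu2 (xs @ [c]) = mu2 (takeWhile (\<lambda>x. c + 2 \<le> x) (xs @ [c])) + 1"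
    using assms by (intro mu2_eq_mu2_takeWhile) (auto simp: sorted_wrt_append)
  also have "takeWhile (\<lambda>x. c + 2 \<le> x) (xs @ [c]) = takeWhile (\<lambda>x. c + 2 \<le> x) xs"
    using assms(3) by (intro takeWhile_append1) auto
  finally show ?thesis
    using mu2_eq_mu2_takeWhile[OF assms] by simp
qed

lemma mu2_snoc_far: "\<forall>x\<in>set xs. c + 2 \<le> x \<Longrightarrow> mu2 (xs @ [c]) = mu2 xs + 1"
  by (rule mu2_append_low_block) auto

lemma mu2_snoc_Suc:
  assumes "sorted_wrt (\<ge>) xs" "\<forall>x\<in>set xs. Suc c \<le> x"
  shows "mu2 (xs @ [Suc c, c]) = mu2 (xs @ [c])"
proof -
  let ?high = "takeWhile (\<lambda>x. c + 2 \<le> x)"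
  have "mu2 (xs @ [Suc c, c]) = mu2 (?high (xs @ [Suc c, c])) + 1"
    using assms by (intro mu2_eq_mu2_takeWhile) (auto simp: sorted_wrt_append)
  moreover have "mu2 (xs @ [c]) = mu2 (?high (xs @ [c])) + 1"
    using assms by (intro mu2_eq_mu2_takeWhile) (auto simp: sorted_wrt_append)
  moreover have "?high (xs @ [Suc c, c]) = ?high (xs @ [c])"
    by (simp add: takeWhile_append)
  ultimately show ?thesis by simp
qed

section \<open>Partitions with all parts at least c\<close>

definition partitions_ge :: "nat \<Rightarrow> nat \<Rightarrow> nat list set" where
  "partitions_ge c n = {xs \<in> partitions_of n. \<forall>x\<in>set xs. c \<le> x}"

definition partitions_smallest :: "nat \<Rightarrow> nat \<Rightarrow> nat list set" where
  "partitions_smallest c n = {xs \<in> partitions_ge c n. c \<in> set xs}"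

lemma finite_partitions_of: "finite (partitions_of n)"
proof (rule finite_subset)
  show "partitions_of n \<subseteq> {xs. set xs \<subseteq> {..n} \<and> length xs \<le> n}"
    using length_le_sum_list member_le_sum_list
    by (fastforce simp: partitions_of_def is_partition_def)
  show "finite {xs. set xs \<subseteq> {..n} \<and> length xs \<le> n}"
    by (rule finite_lists_length_le) simp
qed

lemma finite_partitions_ge: "finite (partitions_ge c n)"
  by (simp add: partitions_ge_def finite_partitions_of)

lemma finite_partitions_smallest: "finite (partitions_smallest c n)"
  by (simp add: partitions_smallest_def finite_partitions_ge)

lemma partitions_ge_1: "partitions_ge 1 n = partitions_of n"
  by (auto simp: partitions_ge_def partitions_of_def is_partition_def Suc_le_eq)

lemma partitions_ge_below:
  assumes "n < c"
  shows "partitions_ge c n = (if n = 0 then {[]} else {})"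
proof -
  have "xs = []" if "xs \<in> partitions_ge c n" for xs
  proof (rule ccontr)
    assume "xs \<noteq> []"
    then obtain x where x: "x \<in> set xs" by (cases xs) auto
    with that have "c \<le> x" "x \<le> n"
      by (auto simp: partitions_ge_def partitions_of_def is_partition_def member_le_sum_list)
    with assms show False by simp
  qed
  moreover have "[] \<in> partitions_ge c n \<longleftrightarrow> n = 0"
    by (auto simp: partitions_ge_def partitions_of_def is_partition_def)
  ultimately show ?thesis by auto
qed

lemma snoc_in_partitions_ge:
  assumes "0 < c"
  shows "ys @ [c] \<in> partitions_ge c n \<longleftrightarrow> c \<le> n \<and> ys \<in> partitions_ge c (n - c)"
  using assms
  by (auto simp: partitions_ge_def partitions_of_def is_partition_def sorted_wrt_append)

lemma partitions_smallest_eq_image: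
  assumes "0 < c"
  shows "partitions_smallest c n =
    (if c \<le> n then (\<lambda>ys. ys @ [c]) ` partitions_ge c (n - c) else {})"
proof -
  have "xs \<in> partitions_smallest c n \<longleftrightarrow> (\<exists>ys. xs = ys @ [c] \<and> ys @ [c] \<in> partitions_ge c n)"
    for xs
  proof
    assume xs: "xs \<in> partitions_smallest c n"
    then have "xs = butlast xs @ [c]"
      by (intro sorted_ge_eq_butlast_snoc_min)
        (auto simp: partitions_smallest_def partitions_ge_def partitions_of_def is_partition_def)
    with xs show "\<exists>ys. xs = ys @ [c] \<and> ys @ [c] \<in> partitions_ge c n"
      by (auto simp: partitions_smallest_def)
  qed (auto simp: partitions_smallest_def)
  then show ?thesis
    using snoc_in_partitions_ge[OF assms] by auto
qed

lemma sum_partitions_smallest: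
  assumes "0 < c"
  shows "(\<Sum>xs\<in>partitions_smallest c n. f xs) =
    (if c \<le> n then \<Sum>ys\<in>partitions_ge c (n - c). f (ys @ [c]) else 0)"
  by (simp add: partitions_smallest_eq_image[OF assms] sum.reindex inj_on_def)

lemma sum_partitions_ge_Suc:
  "(\<Sum>xs\<in>partitions_ge c n. f xs) =
    (\<Sum>xs\<in>partitions_ge (Suc c) n. f xs) + (\<Sum>xs\<in>partitions_smallest c n. f xs)"
proof -
  have split: "partitions_ge c n = partitions_ge (Suc c) n \<union> partitions_smallest c n"
    by (auto simp: partitions_ge_def partitions_smallest_def Suc_le_eq order_le_less)
  have "partitions_ge (Suc c) n \<inter> partitions_smallest c n = {}"
    by (auto simp: partitions_ge_def partitions_smallest_def)
  then show ?thesis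
    unfolding split by (intro sum.union_disjoint finite_partitions_ge finite_partitions_smallest)
qed

section \<open>The signed generating functions and their recurrence\<close>

definition mu2_sign :: "nat list \<Rightarrow> 'a :: comm_ring_1" where
  "mu2_sign xs = (-1) ^ (length xs + mu2 xs)"

lemma mu2_sign_snoc_smallest:
  "ys \<in> partitions_smallest c n \<Longrightarrow> mu2_sign (ys @ [c]) = - mu2_sign ys"
  by (simp add: mu2_sign_def mu2_snoc_smallest partitions_smallest_def partitions_ge_def
      partitions_of_def is_partition_def)

lemma mu2_sign_snoc_far:
  "ys \<in> partitions_ge (c + 2) n \<Longrightarrow> mu2_sign (ys @ [c]) = mu2_sign ys"
  by (simp add: mu2_sign_def mu2_snoc_far partitions_ge_def)

lemma mu2_sign_snoc_Suc:
  "ys \<in> partitions_ge (Suc c) n \<Longrightarrow> mu2_sign (ys @ [Suc c, c]) = - mu2_sign (ys @ [c])"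
  by (simp add: mu2_sign_def mu2_snoc_Suc partitions_ge_def partitions_of_def is_partition_def)

lemma sum_mu2_sign_partitions_of:
  "(\<Sum>xs\<in>partitions_of n. mu2_sign xs) =
    of_nat (card {xs \<in> partitions_of n. even (num_parts xs + mu2 xs)})
    - (of_nat (card {xs \<in> partitions_of n. odd (num_parts xs + mu2 xs)}) :: 'a :: comm_ring_1)"
proof -
  let ?E = "{xs \<in> partitions_of n. even (num_parts xs + mu2 xs)}"
  let ?O = "{xs \<in> partitions_of n. odd (num_parts xs + mu2 xs)}"
  have "(\<Sum>xs\<in>?E \<union> ?O. mu2_sign xs)
      = (\<Sum>xs\<in>?E. mu2_sign xs) + (\<Sum>xs\<in>?O. mu2_sign xs :: 'a)"
    by (rule sum.union_disjoint) (auto simp: finite_partitions_of)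
  moreover have "?E \<union> ?O = partitions_of n"
    by auto
  ultimately have "(\<Sum>xs\<in>partitions_of n. mu2_sign xs)
      = (\<Sum>xs\<in>?E. mu2_sign xs) + (\<Sum>xs\<in>?O. mu2_sign xs :: 'a)"
    by simp
  also have "\<dots> = (\<Sum>xs\<in>?E. 1) + (\<Sum>xs\<in>?O. -1)"
    by (intro arg_cong2[where f = "(+)"] sum.cong) (auto simp: mu2_sign_def num_parts_def)
  finally show ?thesis by simp
qed

definition signed_gf :: "nat \<Rightarrow> 'a :: comm_ring_1 fps" where
  "signed_gf c = Abs_fps (\<lambda>n. \<Sum>xs\<in>partitions_ge c n. mu2_sign xs)"

text \<open>Coefficient \<open>n\<close> is the signed count of the partitions of \<open>n + c\<close> whose smallest part
  \<open>c\<close> occurs exactly once.\<close>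
definition signed_snoc_gf :: "nat \<Rightarrow> 'a :: comm_ring_1 fps" where
  "signed_snoc_gf c = Abs_fps (\<lambda>n. \<Sum>ys\<in>partitions_ge (Suc c) n. mu2_sign (ys @ [c]))"

lemma signed_gf_diff_nth:
  "(signed_gf c - signed_gf (Suc c)) $ n = (\<Sum>xs\<in>partitions_smallest c n. mu2_sign xs)"
  by (simp add: signed_gf_def sum_partitions_ge_Suc[of _ c])

lemma signed_gf_diff_eq:
  assumes "0 < c"
  shows "(1 + fps_X ^ c) * (signed_gf c - signed_gf (Suc c)) = fps_X ^ c * signed_snoc_gf c"
proof (rule fps_ext)
  fix n
  let ?D = "signed_gf c - signed_gf (Suc c) :: 'a fps"
  show "((1 + fps_X ^ c) * ?D) $ n = (fps_X ^ c * signed_snoc_gf c) $ n"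
  proof (cases "c \<le> n")
    case True
    have "?D $ n = (\<Sum>ys\<in>partitions_ge c (n - c). mu2_sign (ys @ [c]))"
      using True unfolding signed_gf_diff_nth by (simp add: sum_partitions_smallest assms)
    also have "\<dots> = signed_snoc_gf c $ (n - c)
        + (\<Sum>ys\<in>partitions_smallest c (n - c). mu2_sign (ys @ [c]))"
      by (simp add: sum_partitions_ge_Suc[of _ c] signed_snoc_gf_def)
    also have "(\<Sum>ys\<in>partitions_smallest c (n - c). mu2_sign (ys @ [c])) = - (?D $ (n - c))"
      unfolding signed_gf_diff_nth by (simp add: mu2_sign_snoc_smallest sum_negf[symmetric])
    finally show ?thesis
      using True by (simp add: fps_one_plus_X_power_mult_nth fps_X_power_mult_nth)
  next
    case False
    then show ?thesis
      unfolding fps_one_plus_X_power_mult_nth fps_X_power_mult_nth signed_gf_diff_nth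
      by (simp add: sum_partitions_smallest assms)
  qed
qed

lemma signed_snoc_gf_eq:
  "(1 + fps_X ^ Suc c) * signed_snoc_gf c = signed_gf (c + 2)"
proof (rule fps_ext)
  fix n
  let ?E = "signed_snoc_gf c :: 'a fps"
  have "?E $ n = signed_gf (c + 2) $ n
      + (\<Sum>ys\<in>partitions_smallest (Suc c) n. mu2_sign (ys @ [c]))"
    by (simp add: signed_snoc_gf_def signed_gf_def sum_partitions_ge_Suc[of _ "Suc c"]
        mu2_sign_snoc_far)
  also have "(\<Sum>ys\<in>partitions_smallest (Suc c) n. mu2_sign (ys @ [c])) =
      (if n < Suc c then 0 else - (?E $ (n - Suc c)))"
    by (simp add: sum_partitions_smallest signed_snoc_gf_def mu2_sign_snoc_Suc sum_negf[symmetric])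
  finally show "((1 + fps_X ^ Suc c) * ?E) $ n = signed_gf (c + 2) $ n"
    by (simp add: fps_one_plus_X_power_mult_nth del: power_Suc)
qed

lemma signed_gf_recurrence:
  assumes "0 < c"
  shows "(1 + fps_X ^ c) * (1 + fps_X ^ Suc c) * (signed_gf c - signed_gf (Suc c))
    = fps_X ^ c * signed_gf (c + 2)"
proof -
  have "(1 + fps_X ^ c) * (1 + fps_X ^ Suc c) * (signed_gf c - signed_gf (Suc c))
      = (1 + fps_X ^ Suc c) * ((1 + fps_X ^ c) * (signed_gf c - signed_gf (Suc c)) :: 'a fps)"
    by (simp add: mult_ac)
  also have "\<dots> = fps_X ^ c * ((1 + fps_X ^ Suc c) * signed_snoc_gf c)"
    by (simp add: signed_gf_diff_eq assms mult_ac)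
  also have "\<dots> = fps_X ^ c * signed_gf (c + 2)"
    by (simp only: signed_snoc_gf_eq)
  finally show ?thesis .
qed

lemma signed_gf_nth_below: "n < c \<Longrightarrow> signed_gf c $ n = 1 $ n"
  by (simp add: signed_gf_def partitions_ge_below mu2_sign_def)

lemma fps_recurrence_unique:
  fixes F G :: "nat \<Rightarrow> 'a :: comm_ring_1 fps"
  assumes F: "\<And>c. 0 < c \<Longrightarrow>
      (1 + fps_X ^ c) * (1 + fps_X ^ Suc c) * (F c - F (Suc c)) = fps_X ^ c * F (c + 2)"
    and G: "\<And>c. 0 < c \<Longrightarrow>
      (1 + fps_X ^ c) * (1 + fps_X ^ Suc c) * (G c - G (Suc c)) = fps_X ^ c * G (c + 2)"
    and below: "\<And>c n. n < c \<Longrightarrow> F c $ n = G c $ n"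
    and "0 < c"
  shows "F c = G c"
proof -
  define H where "H c = F c - G c" for c
  have H: "(1 + fps_X ^ c) * (1 + fps_X ^ Suc c) * (H c - H (Suc c)) = fps_X ^ c * H (c + 2)"
    if "0 < c" for c
  proof -
    let ?A = "(1 + fps_X ^ c) * (1 + fps_X ^ Suc c) :: 'a fps"
    have "?A * (H c - H (Suc c)) = ?A * (F c - F (Suc c)) - ?A * (G c - G (Suc c))"
      by (simp add: H_def algebra_simps)
    also have "\<dots> = fps_X ^ c * F (c + 2) - fps_X ^ c * G (c + 2)"
      by (simp only: F[OF that] G[OF that])
    also have "\<dots> = fps_X ^ c * H (c + 2)"
      by (simp add: H_def right_diff_distrib)
    finally show ?thesis .
  qed
  have "H c $ n = 0" if "0 < c" for c n
    using that
  proof (induction n arbitrary: c rule: less_induct)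
    case (less n)
    txt \<open>The factor in front of \<open>H c - H (Suc c)\<close> has constant coefficient 1, and the
      right-hand side only involves coefficients of \<open>H (c + 2)\<close> below \<open>n\<close>.\<close>
    have step: "H c $ n = H (Suc c) $ n" if "0 < c" for c
    proof -
      have "(H c - H (Suc c)) $ n
          = ((1 + fps_X ^ c) * (1 + fps_X ^ Suc c) * (H c - H (Suc c))) $ n"
        using that less.IH by (intro fps_mult_nth_eq_if_lower_zero[symmetric]) auto
      also have "\<dots> = 0"
        using that less.IH[of "n - c" "c + 2"] unfolding H[OF that] fps_X_power_mult_nth by simp
      finally show ?thesis by simp
    qed
    have "H c $ n = H (c + k) $ n" for k
    proof (induction k)
      case (Suc k)
      then show ?case using step[of "c + k"] less.prems by simp
    qed simp
    also have "H (c + Suc n) $ n = 0"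
      using below[of n "c + Suc n"] by (simp add: H_def)
    finally show ?case .
  qed
  then show ?thesis
    using assms(4) by (simp add: H_def fps_eq_iff)
qed

section \<open>The q-series solution\<close>

definition qpochhammer :: "'a :: comm_ring_1 fps \<Rightarrow> nat \<Rightarrow> 'a fps" where
  "qpochhammer a k = (\<Prod>i<k. 1 - a * fps_X ^ i)"

lemma qpochhammer_0 [simp]: "qpochhammer a 0 = 1"
  by (simp add: qpochhammer_def)

lemma qpochhammer_Suc: "qpochhammer a (Suc k) = qpochhammer a k * (1 - a * fps_X ^ k)"
  by (simp add: qpochhammer_def)

lemma qpochhammer_Suc_shift: "qpochhammer a (Suc k) = (1 - a) * qpochhammer (a * fps_X) k"
  unfolding qpochhammer_def prod.lessThan_Suc_shift by (simp add: mult.assoc)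

lemma qpochhammer_nth_0: "a $ 0 = 0 \<Longrightarrow> qpochhammer a k $ 0 = 1"
  by (induction k) (simp_all add: qpochhammer_Suc)

lemma qpochhammer_X_Suc:
  "qpochhammer fps_X (Suc k) = qpochhammer fps_X k * (1 - fps_X ^ Suc k)"
  by (simp add: qpochhammer_Suc)

lemma qpochhammer_neg_X_power_Suc:
  "qpochhammer (- (fps_X ^ m)) (Suc k) = qpochhammer (- (fps_X ^ m)) k * (1 + fps_X ^ (m + k))"
  by (simp add: qpochhammer_Suc power_add)

lemma qpochhammer_neg_X_power_Suc_shift:
  "qpochhammer (- (fps_X ^ m)) (Suc k) = (1 + fps_X ^ m) * qpochhammer (- (fps_X ^ Suc m)) k"
  by (simp add: qpochhammer_Suc_shift mult.commute)

lemma qpochhammer_neg_X_power_Suc_Suc: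
  "qpochhammer (- (fps_X ^ c)) (Suc k) * (1 + fps_X ^ (c + Suc k))
    = (1 + fps_X ^ c) * ((1 + fps_X ^ Suc c) * qpochhammer (- (fps_X ^ Suc (Suc c))) k)"
proof -
  have "qpochhammer (- (fps_X ^ c)) (Suc k) * (1 + fps_X ^ (c + Suc k))
      = qpochhammer (- (fps_X ^ c)) (Suc (Suc k))"
    by (rule qpochhammer_neg_X_power_Suc[symmetric])
  then show ?thesis
    unfolding qpochhammer_neg_X_power_Suc_shift .
qed

text \<open>In the usual notation, \<open>q\<^bsup>j(j+c-1)\<^esup> / ((q;q)\<^sub>j (-q\<^sup>c;q)\<^sub>j)\<close>,
  where \<open>qpochhammer a k\<close> is \<open>(a;q)\<^sub>k\<close>.\<close>
definition qseries_term :: "nat \<Rightarrow> nat \<Rightarrow> 'a :: field fps" where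
  "qseries_term c j = fps_X ^ (j * (j + c - 1))
    * inverse (qpochhammer fps_X j * qpochhammer (- (fps_X ^ c)) j)"

text \<open>The term \<open>j\<close> has order \<open>j(j+c-1) \<ge> j\<close> for \<open>c > 0\<close>, so only the terms \<open>j \<le> n\<close>
  contribute to the coefficient of \<open>X\<^sup>n\<close> of \<open>\<Sum>\<^sub>j qseries_term c j\<close>.\<close>
definition qseries :: "nat \<Rightarrow> 'a :: field fps" where
  "qseries c = Abs_fps (\<lambda>n. (\<Sum>j\<le>n. qseries_term c j) $ n)"

lemma qseries_term_0 [simp]: "qseries_term c 0 = 1"
  by (simp add: qseries_term_def)

lemma qseries_term_mult_denom:
  assumes "0 < c"
  shows "qseries_term c j * (qpochhammer fps_X j * qpochhammer (- (fps_X ^ c)) j * u)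
    = fps_X ^ (j * (j + c - 1)) * u"
proof -
  have "(qpochhammer fps_X j * qpochhammer (- (fps_X ^ c)) j :: 'a fps) $ 0 = 1"
    using assms by (simp add: qpochhammer_nth_0)
  then have "inverse (qpochhammer fps_X j * qpochhammer (- (fps_X ^ c)) j)
      * (qpochhammer fps_X j * qpochhammer (- (fps_X ^ c)) j) = (1 :: 'a fps)"
    by (intro inverse_mult_eq_1) simp
  then show ?thesis
    by (simp add: qseries_term_def mult.assoc[symmetric])
qed

lemma qseries_term_recurrence:
  assumes "0 < c"
  shows "(1 + fps_X ^ c) * (1 + fps_X ^ Suc c)
      * (qseries_term c (Suc k) - qseries_term (Suc c) (Suc k))
    = fps_X ^ c * (qseries_term (c + 2) k :: 'a :: field fps)"
proof -
  let ?X = "fps_X :: 'a fps"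
  define A where "A = qpochhammer ?X k"
  define B where "B = qpochhammer (- (?X ^ Suc (Suc c))) k"
  define P where "P = (1 + ?X ^ c) * (1 + ?X ^ Suc c)"
  define s where "s = 1 - ?X ^ Suc k"
  define e where "e = k * (k + (c + 2) - 1)"
  define M where "M = A * B * (s * P)"
  txt \<open>\<open>M = (q;q)\<^sub>k\<^sub>+\<^sub>1 (-q\<^sup>c;q)\<^sub>k\<^sub>+\<^sub>2\<close> is a common multiple of the three denominators.\<close>
  have M1: "M = qpochhammer ?X (Suc k) * qpochhammer (- (?X ^ c)) (Suc k)
      * (1 + ?X ^ (c + Suc k))"
    unfolding qpochhammer_X_Suc mult.assoc qpochhammer_neg_X_power_Suc_Suc
    by (simp add: M_def A_def B_def s_def P_def mult_ac)
  have M2: "M = qpochhammer ?X (Suc k) * qpochhammer (- (?X ^ Suc c)) (Suc k) * (1 + ?X ^ c)"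
    unfolding qpochhammer_X_Suc qpochhammer_neg_X_power_Suc_shift
    by (simp add: M_def A_def B_def s_def P_def mult_ac)
  have T1: "qseries_term c (Suc k) * M = ?X ^ (c + e) * (1 + ?X ^ (c + Suc k))"
    unfolding M1 qseries_term_mult_denom[OF assms] using assms by (simp add: e_def algebra_simps)
  have T2: "qseries_term (Suc c) (Suc k) * M = ?X ^ (c + e) * ?X ^ Suc k * (1 + ?X ^ c)"
    unfolding M2 qseries_term_mult_denom[OF zero_less_Suc] using assms
    by (simp add: e_def algebra_simps power_add[symmetric])
  have T3: "qseries_term (c + 2) k * M = ?X ^ e * (s * P)"
    using qseries_term_mult_denom[of "c + 2" k "s * P"]
    by (simp add: M_def A_def B_def e_def mult_ac)
  have "M $ 0 \<noteq> 0"
    unfolding M1 by (simp add: qpochhammer_nth_0 assms)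
  moreover have "(P * (qseries_term c (Suc k) - qseries_term (Suc c) (Suc k))) * M
      = (?X ^ c * qseries_term (c + 2) k) * M"
  proof -
    have "(P * (qseries_term c (Suc k) - qseries_term (Suc c) (Suc k))) * M
        = P * (qseries_term c (Suc k) * M - qseries_term (Suc c) (Suc k) * M)"
      by (simp add: algebra_simps)
    also have "\<dots> = P * (?X ^ (c + e) * (1 + ?X ^ (c + Suc k))
        - ?X ^ (c + e) * ?X ^ Suc k * (1 + ?X ^ c))"
      by (simp only: T1 T2)
    also have "\<dots> = ?X ^ c * (?X ^ e * (s * P))"
      by (simp add: s_def power_add algebra_simps)
    also have "\<dots> = (?X ^ c * qseries_term (c + 2) k) * M"
      by (simp only: T3 mult.assoc)
    finally show ?thesis .
  qed
  ultimately show ?thesis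
    unfolding P_def using fps_mult_right_cancel_unit by blast
qed

lemma qseries_term_nth_eq_0: "n < j * (j + c - 1) \<Longrightarrow> qseries_term c j $ n = 0"
  by (simp add: qseries_term_def fps_X_power_mult_nth)

lemma qseries_nth:
  assumes "0 < c" "n \<le> N"
  shows "qseries c $ n = (\<Sum>j\<le>N. qseries_term c j) $ n"
proof -
  have vanish: "qseries_term c j $ n = 0" if "n < j" for j
  proof (rule qseries_term_nth_eq_0)
    have "j * 1 \<le> j * (j + c - 1)"
      using assms(1) that by (intro mult_le_mono2) linarith
    with that show "n < j * (j + c - 1)" by linarith
  qed
  have "(\<Sum>j\<le>n. qseries_term c j $ n) = (\<Sum>j\<le>N. qseries_term c j $ n)"
    using assms(2) by (intro sum.mono_neutral_left) (auto simp: not_le vanish)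
  then show ?thesis
    by (simp add: qseries_def fps_sum_nth)
qed

lemma qseries_nth_below:
  assumes "n < c"
  shows "qseries c $ n = 1 $ n"
proof -
  have "qseries_term c j $ n = 0" if "0 < j" for j
  proof (rule qseries_term_nth_eq_0)
    have "1 * (j + c - 1) \<le> j * (j + c - 1)"
      using that by (intro mult_le_mono1) linarith
    with assms that show "n < j * (j + c - 1)" by linarith
  qed
  then have "(\<Sum>j\<le>n. qseries_term c j $ n) = (\<Sum>j\<in>{0}. qseries_term c j $ n)"
    by (intro sum.mono_neutral_right) auto
  then show ?thesis
    by (simp add: qseries_def fps_sum_nth)
qed

lemma qseries_partial_recurrence:
  assumes "0 < c"
  shows "(1 + fps_X ^ c) * (1 + fps_X ^ Suc c)
      * ((\<Sum>j\<le>Suc N. qseries_term c j) - (\<Sum>j\<le>Suc N. qseries_term (Suc c) j))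
    = fps_X ^ c * (\<Sum>j\<le>N. qseries_term (c + 2) j :: 'a :: field fps)"
proof -
  have "(\<Sum>j\<le>Suc N. qseries_term c j) - (\<Sum>j\<le>Suc N. qseries_term (Suc c) j)
      = (\<Sum>j\<le>N. qseries_term c (Suc j) - qseries_term (Suc c) (Suc j) :: 'a fps)"
    unfolding sum_subtractf[symmetric] sum.atMost_Suc_shift by (simp add: sum_subtractf)
  then show ?thesis
    by (simp add: sum_distrib_left qseries_term_recurrence[OF assms] del: power_Suc)
qed

lemma qseries_recurrence:
  assumes "0 < c"
  shows "(1 + fps_X ^ c) * (1 + fps_X ^ Suc c) * (qseries c - qseries (Suc c))
    = fps_X ^ c * (qseries (c + 2) :: 'a :: field fps)"
proof (rule fps_ext)
  fix n
  let ?S = "\<lambda>c N. \<Sum>j\<le>N. qseries_term c j :: 'a fps"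
  have "((1 + fps_X ^ c) * (1 + fps_X ^ Suc c) * (qseries c - qseries (Suc c))) $ n
      = ((1 + fps_X ^ c) * (1 + fps_X ^ Suc c) * (?S c (Suc n) - ?S (Suc c) (Suc n))) $ n"
  proof (rule fps_mult_nth_cong)
    fix i assume "i \<le> n"
    then have "i \<le> Suc n" by simp
    then show "(qseries c - qseries (Suc c)) $ i = (?S c (Suc n) - ?S (Suc c) (Suc n)) $ i"
      by (simp only: fps_sub_nth qseries_nth[OF assms] qseries_nth[OF zero_less_Suc])
  qed
  also have "\<dots> = (fps_X ^ c * ?S (c + 2) n) $ n"
    by (simp only: qseries_partial_recurrence[OF assms])
  also have "\<dots> = (fps_X ^ c * qseries (c + 2)) $ n"
  proof (rule fps_mult_nth_cong)
    fix i assume "i \<le> n"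
    show "?S (c + 2) n $ i = qseries (c + 2) $ i"
      by (rule sym, rule qseries_nth) (use \<open>i \<le> n\<close> in simp_all)
  qed
  finally show "((1 + fps_X ^ c) * (1 + fps_X ^ Suc c) * (qseries c - qseries (Suc c))) $ n
      = (fps_X ^ c * qseries (c + 2) :: 'a fps) $ n" .
qed

section \<open>Partitions into distinct odd parts\<close>

definition odd_distinct_partitions :: "nat \<Rightarrow> nat \<Rightarrow> nat list set" where
  "odd_distinct_partitions j n =
    {xs \<in> partitions_of n. distinct xs \<and> (\<forall>x\<in>set xs. odd x) \<and> length xs = j}"

definition odd_distinct_gf :: "nat \<Rightarrow> 'a :: comm_semiring_1 fps" where
  "odd_distinct_gf j = Abs_fps (\<lambda>n. of_nat (card (odd_distinct_partitions j n)))"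

lemma finite_odd_distinct_partitions: "finite (odd_distinct_partitions j n)"
  by (simp add: odd_distinct_partitions_def finite_partitions_of)

lemma map_add2_in_odd_distinct_partitions:
  "map (\<lambda>x. x + 2) ys \<in> odd_distinct_partitions j n \<longleftrightarrow>
    2 * j \<le> n \<and> ys \<in> odd_distinct_partitions j (n - 2 * j)"
proof -
  have "distinct (map (\<lambda>x. x + 2) ys) \<longleftrightarrow> distinct ys"
    by (simp add: distinct_map inj_on_def)
  moreover have "sorted_wrt (\<ge>) (map (\<lambda>x. x + 2) ys) \<longleftrightarrow> sorted_wrt (\<ge>) ys"
    by (simp add: sorted_wrt_map)
  moreover have "(\<forall>x\<in>set ys. odd x) \<Longrightarrow> (\<forall>x\<in>set ys. 0 < x)"
    using odd_pos by blast
  moreover have "sum_list (map (\<lambda>x. x + 2) ys) = sum_list ys + length ys * 2"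
    by (rule sum_list_map_add_const)
  ultimately show ?thesis
    by (auto simp: odd_distinct_partitions_def partitions_of_def is_partition_def)
qed

lemma snoc_1_in_odd_distinct_partitions:
  "zs @ [1] \<in> odd_distinct_partitions (Suc j) n \<longleftrightarrow>
    1 \<le> n \<and> 1 \<notin> set zs \<and> zs \<in> odd_distinct_partitions j (n - 1)"
proof -
  have "sorted_wrt (\<ge>) (zs @ [1]) \<longleftrightarrow> sorted_wrt (\<ge>) zs \<and> (\<forall>x\<in>set zs. 0 < x)"
    by (auto simp: sorted_wrt_append)
  then show ?thesis
    by (auto simp: odd_distinct_partitions_def partitions_of_def is_partition_def)
qed

lemma odd_distinct_partitions_without_1:
  "{xs \<in> odd_distinct_partitions j n. 1 \<notin> set xs} =
    (if 2 * j \<le> n then map (\<lambda>x. x + 2) ` odd_distinct_partitions j (n - 2 * j) else {})"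
proof (intro equalityI subsetI)
  fix xs assume "xs \<in> {xs \<in> odd_distinct_partitions j n. 1 \<notin> set xs}"
  then have xs: "xs \<in> odd_distinct_partitions j n" "1 \<notin> set xs" by auto
  have ge2: "2 \<le> x" if "x \<in> set xs" for x
  proof -
    have "odd x" "x \<noteq> 1"
      using xs that by (auto simp: odd_distinct_partitions_def)
    then show ?thesis by presburger
  qed
  have shift: "xs = map (\<lambda>x. x + 2) (map (\<lambda>x. x - 2) xs)"
    unfolding map_map by (intro map_idI[symmetric]) (use ge2 in fastforce)
  with xs(1) have "2 * j \<le> n" "map (\<lambda>x. x - 2) xs \<in> odd_distinct_partitions j (n - 2 * j)"
    using map_add2_in_odd_distinct_partitions by metis+
  moreover from this(2) have "xs \<in> map (\<lambda>x. x + 2) ` odd_distinct_partitions j (n - 2 * j)"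
    by (subst shift) (rule imageI)
  ultimately show "xs \<in> (if 2 * j \<le> n
      then map (\<lambda>x. x + 2) ` odd_distinct_partitions j (n - 2 * j) else {})"
    by simp
next
  fix xs assume "xs \<in> (if 2 * j \<le> n
      then map (\<lambda>x. x + 2) ` odd_distinct_partitions j (n - 2 * j) else {})"
  then obtain ys where
    "2 * j \<le> n" "ys \<in> odd_distinct_partitions j (n - 2 * j)" "xs = map (\<lambda>x. x + 2) ys"
    by (auto split: if_splits)
  then show "xs \<in> {xs \<in> odd_distinct_partitions j n. 1 \<notin> set xs}"
    using map_add2_in_odd_distinct_partitions by auto
qed

lemma odd_distinct_partitions_with_1:
  "{xs \<in> odd_distinct_partitions (Suc j) n. 1 \<in> set xs} =
    (if 1 \<le> n then (\<lambda>zs. zs @ [1]) ` {zs \<in> odd_distinct_partitions j (n - 1). 1 \<notin> set zs}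
     else {})"
proof (intro equalityI subsetI)
  fix xs assume "xs \<in> {xs \<in> odd_distinct_partitions (Suc j) n. 1 \<in> set xs}"
  then have xs: "xs \<in> odd_distinct_partitions (Suc j) n" "1 \<in> set xs" by auto
  then have "xs = butlast xs @ [1]"
    by (intro sorted_ge_eq_butlast_snoc_min)
      (auto simp: odd_distinct_partitions_def partitions_of_def is_partition_def Suc_le_eq)
  with xs(1) snoc_1_in_odd_distinct_partitions[of "butlast xs"]
  show "xs \<in> (if 1 \<le> n
      then (\<lambda>zs. zs @ [1]) ` {zs \<in> odd_distinct_partitions j (n - 1). 1 \<notin> set zs} else {})"
    by (metis (mono_tags, lifting) image_eqI mem_Collect_eq)
next
  fix xs assume "xs \<in> (if 1 \<le> n
      then (\<lambda>zs. zs @ [1]) ` {zs \<in> odd_distinct_partitions j (n - 1). 1 \<notin> set zs} else {})"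
  then show "xs \<in> {xs \<in> odd_distinct_partitions (Suc j) n. 1 \<in> set xs}"
    using snoc_1_in_odd_distinct_partitions by (auto split: if_splits)
qed

lemma card_odd_distinct_partitions_Suc:
  "card (odd_distinct_partitions (Suc j) n) =
    (if 2 * j + 2 \<le> n then card (odd_distinct_partitions (Suc j) (n - (2 * j + 2))) else 0)
    + (if 2 * j + 1 \<le> n then card (odd_distinct_partitions j (n - (2 * j + 1))) else 0)"
proof -
  let ?P = "odd_distinct_partitions (Suc j) n"
  have "card ?P = card {xs \<in> ?P. 1 \<notin> set xs} + card {xs \<in> ?P. 1 \<in> set xs}"
    by (subst card_Un_disjoint[symmetric])
      (auto simp: finite_odd_distinct_partitions intro: arg_cong[of _ _ card])
  also have "card {xs \<in> ?P. 1 \<notin> set xs} =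
      (if 2 * j + 2 \<le> n then card (odd_distinct_partitions (Suc j) (n - (2 * j + 2))) else 0)"
    unfolding odd_distinct_partitions_without_1 by (simp add: card_image inj_on_def)
  also have "card {xs \<in> ?P. 1 \<in> set xs} =
      (if 1 \<le> n then card {zs \<in> odd_distinct_partitions j (n - 1). 1 \<notin> set zs} else 0)"
    unfolding odd_distinct_partitions_with_1 by (simp add: card_image inj_on_def)
  also have "\<dots> = (if 2 * j + 1 \<le> n then card (odd_distinct_partitions j (n - (2 * j + 1))) else 0)"
    unfolding odd_distinct_partitions_without_1
    by (cases "2 * j + 1 \<le> n") (auto simp: card_image inj_on_def diff_diff_add)
  finally show ?thesis .
qed

lemma odd_distinct_gf_0: "odd_distinct_gf 0 = 1"
proof -
  have "odd_distinct_partitions 0 n = (if n = 0 then {[]} else {})" for n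
    by (auto simp: odd_distinct_partitions_def partitions_of_def is_partition_def)
  then show ?thesis
    by (simp add: odd_distinct_gf_def fps_eq_iff)
qed

lemma odd_distinct_gf_Suc:
  "odd_distinct_gf (Suc j) =
    fps_X ^ (2 * j + 2) * odd_distinct_gf (Suc j) + fps_X ^ (2 * j + 1) * odd_distinct_gf j"
proof (rule fps_ext)
  fix n
  note card_odd_distinct_partitions_Suc[of j n]
  then show "odd_distinct_gf (Suc j) $ n =
      (fps_X ^ (2 * j + 2) * odd_distinct_gf (Suc j) + fps_X ^ (2 * j + 1) * odd_distinct_gf j
        :: 'a fps) $ n"
    unfolding fps_add_nth fps_X_power_mult_nth by (simp add: odd_distinct_gf_def not_less)
qed

lemma qseries_term_1_Suc:
  "qseries_term 1 (Suc j) * (1 - fps_X ^ (2 * j + 2))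
    = fps_X ^ (2 * j + 1) * (qseries_term 1 j :: 'a :: field fps)"
proof -
  let ?X = "fps_X :: 'a fps"
  define D where "D = qpochhammer ?X j * qpochhammer (- (?X ^ 1)) j"
  have D_Suc: "qpochhammer ?X (Suc j) * qpochhammer (- (?X ^ 1)) (Suc j) * 1
      = D * (1 - ?X ^ (2 * j + 2))"
  proof -
    have "(1 - ?X ^ Suc j) * (1 + ?X ^ (1 + j)) = 1 - ?X ^ (2 * j + 2)"
      by (simp add: algebra_simps power_add[symmetric] mult_2)
    then show ?thesis
      by (simp only: D_def qpochhammer_X_Suc qpochhammer_neg_X_power_Suc mult_ac mult_1_right
          mult_1_left)
  qed
  have "(qseries_term 1 (Suc j) * (1 - ?X ^ (2 * j + 2))) * D
      = qseries_term 1 (Suc j) * (qpochhammer ?X (Suc j) * qpochhammer (- (?X ^ 1)) (Suc j) * 1)"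
    unfolding D_Suc by (simp only: mult_ac)
  also have "\<dots> = ?X ^ (Suc j * Suc j)"
    using qseries_term_mult_denom[of 1 "Suc j" 1] by simp
  also have "\<dots> = (?X ^ (2 * j + 1) * qseries_term 1 j) * D"
    using qseries_term_mult_denom[of 1 j "?X ^ (2 * j + 1)"]
    by (simp add: D_def mult_ac power_add[symmetric])
  finally have "(qseries_term 1 (Suc j) * (1 - ?X ^ (2 * j + 2))) * D
      = (?X ^ (2 * j + 1) * qseries_term 1 j) * D" .
  moreover have "D $ 0 \<noteq> 0"
    by (simp add: D_def qpochhammer_nth_0)
  ultimately show ?thesis
    using fps_mult_right_cancel_unit by blast
qed

lemma qseries_term_1_eq_odd_distinct_gf:
  "qseries_term 1 j = (odd_distinct_gf j :: 'a :: field fps)"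
proof (induction j)
  case 0
  show ?case by (simp add: odd_distinct_gf_0)
next
  case (Suc j)
  let ?u = "1 - fps_X ^ (2 * j + 2) :: 'a fps"
  have "odd_distinct_gf (Suc j) * ?u = fps_X ^ (2 * j + 1) * odd_distinct_gf j"
    using odd_distinct_gf_Suc[of j] by (simp add: algebra_simps)
  also have "\<dots> = qseries_term 1 (Suc j) * ?u"
    by (simp only: qseries_term_1_Suc Suc.IH)
  finally have "qseries_term 1 (Suc j) * ?u = odd_distinct_gf (Suc j) * ?u" ..
  moreover have "?u $ 0 \<noteq> 0"
    by simp
  ultimately show ?case
    using fps_mult_right_cancel_unit by blast
qed

lemma qseries_1_nth:
  "qseries 1 $ n = of_nat (card {xs \<in> partitions_of n. distinct xs \<and> (\<forall>x\<in>set xs. odd x)})"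
proof -
  have parts: "{xs \<in> partitions_of n. distinct xs \<and> (\<forall>x\<in>set xs. odd x)}
      = (\<Union>j\<le>n. odd_distinct_partitions j n)"
    using length_le_sum_list
    by (fastforce simp: odd_distinct_partitions_def partitions_of_def is_partition_def)
  have "qseries 1 $ n = (\<Sum>j\<le>n. qseries_term 1 j $ n :: 'a)"
    by (simp add: qseries_def fps_sum_nth)
  also have "\<dots> = (\<Sum>j\<le>n. of_nat (card (odd_distinct_partitions j n)))"
    by (simp only: qseries_term_1_eq_odd_distinct_gf) (simp add: odd_distinct_gf_def)
  also have "\<dots> = of_nat (card (\<Union>j\<le>n. odd_distinct_partitions j n))"
    by (subst card_UN_disjoint)
      (auto simp: finite_partitions_of odd_distinct_partitions_def)
  finally show ?thesis
    unfolding parts .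
qed

theorem corollary1p6:
  fixes n :: nat
  shows "int (card {xs \<in> partitions_of n. even (num_parts xs + mu2 xs)})
         - int (card {xs \<in> partitions_of n. odd (num_parts xs + mu2 xs)})
       = int (card {xs \<in> partitions_of n. distinct xs \<and> (\<forall>x\<in>set xs. odd x)})"
proof -
  have gf_eq: "signed_gf 1 = (qseries 1 :: rat fps)"
  proof (rule fps_recurrence_unique[of signed_gf qseries])
    show "signed_gf c $ m = qseries c $ m" if "m < c" for c m
      using that by (simp add: signed_gf_nth_below qseries_nth_below)
  qed (simp_all add: signed_gf_recurrence qseries_recurrence del: power_Suc)
  have "(\<Sum>xs\<in>partitions_of n. mu2_sign xs) = (signed_gf 1 $ n :: rat)"
    unfolding signed_gf_def partitions_ge_1 by simp
  also have "\<dots> = qseries 1 $ n"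
    by (simp only: gf_eq)
  also have "\<dots> = of_nat (card {xs \<in> partitions_of n. distinct xs \<and> (\<forall>x\<in>set xs. odd x)})"
    by (rule qseries_1_nth)
  finally have "(of_int (int (card {xs \<in> partitions_of n. even (num_parts xs + mu2 xs)})
         - int (card {xs \<in> partitions_of n. odd (num_parts xs + mu2 xs)})) :: rat)
       = of_int (int (card {xs \<in> partitions_of n. distinct xs \<and> (\<forall>x\<in>set xs. odd x)}))"
    unfolding sum_mu2_sign_partitions_of by simp
  then show ?thesis
    by (simp only: of_int_eq_iff)
qed

end
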